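(* Let $P$ be a finite point set in general position. Every cut vertex of $G_\bigtriangledown(P)$ lies on the boundary of the outer (unbounded) face of the straight-line plane embedding of $G_\bigtriangledown(P)$.
   Context: A finite point set $P$ in the plane is in general position if no line through two points of $P$ makes an angle of $0^\circ$, $60^\circ$ or $120^\circ$ with the horizontal. A down-triangle is an equilateral triangle with one side parallel to the $x$-axis and the corner opposite to this side below that side. $G_\bigtriangledown(P)$ is the graph with vertex set $P$ in which $p,q$ are adjacent iff some (closed) down-triangle contains $p$ and $q$ and no other point of $P$. Drawing each edge $pq$ as the straight segment $pq$ gives a plane embedding of $G_\bigtriangledown(P)$. *)

theory Defs
  imports "HOL-Analysis.Analysis"
begin

type_synonym pt = "real \<times> real"

definition general_position :: "pt set \<Rightarrow> bool" where
  "general_position P \<longleftrightarrow>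
     (\<forall>p\<in>P. \<forall>q\<in>P. p \<noteq> q \<longrightarrow>
        snd q - snd p \<noteq> 0 \<and>
        snd q - snd p \<noteq> sqrt 3 * (fst q - fst p) \<and>
        snd q - snd p \<noteq> - sqrt 3 * (fst q - fst p))"

definition down_triangle :: "pt set \<Rightarrow> bool" where
  "down_triangle T \<longleftrightarrow>
     (\<exists>a b s. s > 0 \<and>
        T = convex hull {(a, b), (a - s/2, b + s * sqrt 3 / 2), (a + s/2, b + s * sqrt 3 / 2)})"

definition tri_adj :: "pt set \<Rightarrow> pt \<Rightarrow> pt \<Rightarrow> bool" where
  "tri_adj P p q \<longleftrightarrow> p \<in> P \<and> q \<in> P \<and> p \<noteq> q \<and>
     (\<exists>T. down_triangle T \<and> T \<inter> P = {p, q})"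

definition reach :: "('a \<Rightarrow> 'a \<Rightarrow> bool) \<Rightarrow> 'a set \<Rightarrow> 'a \<Rightarrow> 'a \<Rightarrow> bool" where
  "reach E V = (\<lambda>u w. u \<in> V \<and> w \<in> V \<and> E u w)\<^sup>*\<^sup>*"

definition num_components :: "('a \<Rightarrow> 'a \<Rightarrow> bool) \<Rightarrow> 'a set \<Rightarrow> nat" where
  "num_components E V = card ((\<lambda>v. {w \<in> V. reach E V v w}) ` V)"

definition cut_vertex :: "('a \<Rightarrow> 'a \<Rightarrow> bool) \<Rightarrow> 'a set \<Rightarrow> 'a \<Rightarrow> bool" where
  "cut_vertex E V v \<longleftrightarrow> v \<in> V \<and> num_components E (V - {v}) > num_components E V"

definition tri_drawing :: "pt set \<Rightarrow> pt set" where
  "tri_drawing P = P \<union> \<Union>{closed_segment p q | p q. tri_adj P p q}"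

definition outer_face :: "pt set \<Rightarrow> pt set" where
  "outer_face P = outside (tri_drawing P)"

end

theory Submission
  imports Defs
begin

(* Measure points by three linear coordinates tri_coord l, one for each side l of a
   down-triangle; they sum to zero, and the down-triangles are exactly the regions
   {p. \<forall>l. c l \<le> tri_coord l p} with c summing to a negative number.  A set S of points such
   that every point of P in the smallest down-triangle spanned by two points of S again lies in S
   induces a connected subgraph of G: split at a third point of that triangle and induct on the
   number of points it contains.  The open half-planes {tri_coord l > tri_coord l v} are such sets,
   they cover P - {v}, and two of them meet in the 60-degree wedge
   {tri_coord i \<ge> tri_coord i v, tri_coord j \<ge> tri_coord j v} minus v.  Hence at a cut vertex v
   one of these wedges contains no other point of P.  The ray from v along which tri_coord i and
   tri_coord j grow at equal rates then avoids the drawing, since a down-triangle witnessing an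
   edge across it would contain v; being unbounded and connected, the ray lies in the outer face,
   so v is on its frontier. *)

datatype side = Left_side | Right_side | Top_side

(* tri_coord l p is twice the signed distance of p from the line through the origin parallel to
   side l of a down-triangle, positive towards the inside of the triangle. *)
primrec tri_normal :: "side \<Rightarrow> pt" where
  "tri_normal Left_side = (sqrt 3, 1)"
| "tri_normal Right_side = (- sqrt 3, 1)"
| "tri_normal Top_side = (0, -2)"

definition tri_coord :: "side \<Rightarrow> pt \<Rightarrow> real" where
  "tri_coord l p = tri_normal l \<bullet> p"

lemma tri_coord_simps [simp]:
  "tri_coord Left_side p = sqrt 3 * fst p + snd p"
  "tri_coord Right_side p = snd p - sqrt 3 * fst p"
  "tri_coord Top_side p = -2 * snd p"
  by (auto simp: tri_coord_def inner_prod_def)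

lemma tri_coord_add: "tri_coord l (p + q) = tri_coord l p + tri_coord l q"
  and tri_coord_scaleR: "tri_coord l (t *\<^sub>R p) = t * tri_coord l p"
  by (simp_all add: tri_coord_def inner_add_right)

lemma tri_coord_sum: "tri_coord Left_side p + tri_coord Right_side p + tri_coord Top_side p = 0"
  by simp

lemma tri_coord_normal: "tri_coord l (tri_normal m) = (if l = m then 4 else -2)"
  by (cases l; cases m) simp_all

lemma tri_coord_le_imp_eq:
  assumes "\<And>l. tri_coord l p \<le> tri_coord l q"
  shows "p = q"
proof -
  have "tri_coord Left_side p = tri_coord Left_side q" "tri_coord Right_side p = tri_coord Right_side q"
    using assms[of Left_side] assms[of Right_side] assms[of Top_side] tri_coord_sum[of p] tri_coord_sum[of q]
    by linarith+
  then have "sqrt 3 * fst p + snd p = sqrt 3 * fst q + snd q"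
    and "snd p - sqrt 3 * fst p = snd q - sqrt 3 * fst q"
    by simp_all
  then have "snd p = snd q" "sqrt 3 * fst p = sqrt 3 * fst q"
    by linarith+
  then show ?thesis by (simp add: prod_eq_iff)
qed

lemma exists_tri_coord_less: "p \<noteq> q \<Longrightarrow> \<exists>l. tri_coord l q < tri_coord l p"
  using tri_coord_le_imp_eq by (meson not_le)

lemma general_position_tri_coord:
  assumes "general_position P" "p \<in> P" "q \<in> P" "p \<noteq> q"
  shows "tri_coord l p \<noteq> tri_coord l q"
  using assms unfolding general_position_def by (cases l) (auto simp: algebra_simps)

lemma tri_coord_closed_segment:
  assumes "w \<in> closed_segment p q"
  shows "min (tri_coord l p) (tri_coord l q) \<le> tri_coord l w"
    and "tri_coord l w \<le> max (tri_coord l p) (tri_coord l q)"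
proof -
  have "linear (tri_coord l)"
    unfolding tri_coord_def by (rule bounded_linear.linear[OF bounded_linear_inner_right])
  then have "tri_coord l w \<in> closed_segment (tri_coord l p) (tri_coord l q)"
    using assms closed_segment_linear_image by blast
  then show "min (tri_coord l p) (tri_coord l q) \<le> tri_coord l w"
    and "tri_coord l w \<le> max (tri_coord l p) (tri_coord l q)"
    by (auto simp: closed_segment_eq_real_ivl split: if_splits)
qed

definition tri_region :: "(side \<Rightarrow> real) \<Rightarrow> pt set" where
  "tri_region c = {p. \<forall>l. c l \<le> tri_coord l p}"

lemma convex_tri_region: "convex (tri_region c)"
proof -
  have "tri_region c = (\<Inter>l. {p. tri_normal l \<bullet> p \<ge> c l})"
    by (auto simp: tri_region_def tri_coord_def)
  then show ?thesis
    by (simp add: convex_INT convex_halfspace_ge)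
qed

lemma convex_hull_down_triangle:
  fixes a b s :: real
  defines "c \<equiv> \<lambda>l. tri_coord l (a, b) - (if l = Top_side then sqrt 3 * s else 0)"
  assumes "s > 0"
  shows "convex hull {(a, b), (a - s/2, b + s * sqrt 3 / 2), (a + s/2, b + s * sqrt 3 / 2)}
    = tri_region c"
    (is "convex hull {?A, ?B, ?C} = _")
proof
  define h where "h = sqrt 3 * s"
  have "h > 0" using assms(2) by (simp add: h_def)
  have A: "tri_coord l ?A = c l + (if l = Top_side then h else 0)"
    and B: "tri_coord l ?B = c l + (if l = Right_side then h else 0)"
    and C: "tri_coord l ?C = c l + (if l = Left_side then h else 0)" for l
    by (cases l; simp add: c_def h_def algebra_simps)+
  show "convex hull {?A, ?B, ?C} \<subseteq> tri_region c"
    using A B C \<open>h > 0\<close> by (intro hull_minimal convex_tri_region) (auto simp: tri_region_def)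
  show "tri_region c \<subseteq> convex hull {?A, ?B, ?C}"
  proof
    fix p assume p: "p \<in> tri_region c"
    \<comment> \<open>the barycentric coordinate of p for the vertex opposite side l\<close>
    define u where "u l = (tri_coord l p - c l) / h" for l
    have u_nonneg: "u l \<ge> 0" for l
      using p \<open>h > 0\<close> by (simp add: u_def tri_region_def)
    have u_h: "u l * h = tri_coord l p - c l" for l
      using \<open>h > 0\<close> by (simp add: u_def)
    have "c Left_side + c Right_side + c Top_side = - h"
      by (simp add: c_def h_def)
    then have "(u Top_side + u Right_side + u Left_side) * h = 1 * h"
      unfolding distrib_right u_h using tri_coord_sum[of p] by linarith
    then have u_sum: "u Top_side + u Right_side + u Left_side = 1"
      using \<open>h > 0\<close> by simp
    have "tri_coord l (u Top_side *\<^sub>R ?A + u Right_side *\<^sub>R ?B + u Left_side *\<^sub>R ?C) = tri_coord l p" for l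
    proof -
      have "tri_coord l (u Top_side *\<^sub>R ?A + u Right_side *\<^sub>R ?B + u Left_side *\<^sub>R ?C)
          = (u Top_side + u Right_side + u Left_side) * c l + u l * h"
        unfolding tri_coord_add tri_coord_scaleR A B C by (cases l) (simp_all add: algebra_simps)
      also have "\<dots> = tri_coord l p"
        unfolding u_sum u_h by simp
      finally show ?thesis .
    qed
    then have "p = u Top_side *\<^sub>R ?A + u Right_side *\<^sub>R ?B + u Left_side *\<^sub>R ?C"
      by (intro tri_coord_le_imp_eq) simp
    then show "p \<in> convex hull {?A, ?B, ?C}"
      unfolding convex_hull_3 using u_nonneg u_sum
      by (intro CollectI exI[of _ "u Top_side"] exI[of _ "u Right_side"] exI[of _ "u Left_side"]) simp
  qed
qed

lemma down_triangle_iff: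
  "down_triangle T \<longleftrightarrow> (\<exists>c. c Left_side + c Right_side + c Top_side < 0 \<and> T = tri_region c)"
proof
  assume "down_triangle T"
  then obtain a b s where "s > 0"
    and "T = convex hull {(a, b), (a - s/2, b + s * sqrt 3 / 2), (a + s/2, b + s * sqrt 3 / 2)}"
    unfolding down_triangle_def by blast
  then show "\<exists>c. c Left_side + c Right_side + c Top_side < 0 \<and> T = tri_region c"
    using convex_hull_down_triangle[OF \<open>s > 0\<close>, of a b] by (intro exI conjI) simp_all
next
  assume "\<exists>c. c Left_side + c Right_side + c Top_side < 0 \<and> T = tri_region c"
  then obtain c where c: "c Left_side + c Right_side + c Top_side < 0" and T: "T = tri_region c"
    by blast
  define a where "a = (c Left_side - c Right_side) / (2 * sqrt 3)"
  define b where "b = (c Left_side + c Right_side) / 2"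
  define s where "s = - (c Left_side + c Right_side + c Top_side) / sqrt 3"
  have "s > 0" using c by (simp add: s_def)
  have "(\<lambda>l. tri_coord l (a, b) - (if l = Top_side then sqrt 3 * s else 0)) = c"
  proof
    fix l show "tri_coord l (a, b) - (if l = Top_side then sqrt 3 * s else 0) = c l"
      by (cases l) (simp_all add: a_def b_def s_def field_simps)
  qed
  then have "T = convex hull {(a, b), (a - s/2, b + s * sqrt 3 / 2), (a + s/2, b + s * sqrt 3 / 2)}"
    using convex_hull_down_triangle[OF \<open>s > 0\<close>, of a b] T by simp
  then show "down_triangle T"
    unfolding down_triangle_def using \<open>s > 0\<close> by blast
qed

lemma tri_region_sum_neg:
  assumes "p \<in> tri_region c" "q \<in> tri_region c" "p \<noteq> q"
  shows "c Left_side + c Right_side + c Top_side < 0"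
proof (rule ccontr)
  assume sum: "\<not> ?thesis"
  have "tri_coord l x = c l" if "x \<in> tri_region c" for x l
  proof -
    have "c l' \<le> tri_coord l' x" for l'
      using that by (simp add: tri_region_def)
    from this[of Left_side] this[of Right_side] this[of Top_side] show ?thesis
      using sum tri_coord_sum[of x] by (cases l; simp; linarith)
  qed
  then show False
    using assms tri_coord_le_imp_eq by (metis order_refl)
qed

lemma tri_adj_iff:
  "tri_adj P p q \<longleftrightarrow> p \<in> P \<and> q \<in> P \<and> p \<noteq> q \<and> (\<exists>c. tri_region c \<inter> P = {p, q})"
proof -
  have "(\<exists>T. down_triangle T \<and> T \<inter> P = {p, q}) \<longleftrightarrow> (\<exists>c. tri_region c \<inter> P = {p, q})"
    if "p \<noteq> q"
    using that tri_region_sum_neg unfolding down_triangle_iff by blast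
  then show ?thesis
    unfolding tri_adj_def by blast
qed

definition tri_span :: "pt \<Rightarrow> pt \<Rightarrow> pt set" where
  "tri_span p q = tri_region (\<lambda>l. min (tri_coord l p) (tri_coord l q))"

lemma tri_span_commute: "tri_span p q = tri_span q p"
  by (simp add: tri_span_def min.commute)

lemma ends_in_tri_span: "p \<in> tri_span p q" "q \<in> tri_span p q"
  by (simp_all add: tri_span_def tri_region_def)

lemma tri_span_least: "p \<in> tri_region c \<Longrightarrow> q \<in> tri_region c \<Longrightarrow> tri_span p q \<subseteq> tri_region c"
  unfolding tri_span_def tri_region_def by (auto intro: order_trans[OF min.boundedI])

lemma tri_span_same: "tri_span p p = {p}"
proof -
  have "x = p" if "\<forall>l. tri_coord l p \<le> tri_coord l x" for x
    using that tri_coord_le_imp_eq by metis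
  then show ?thesis
    unfolding tri_span_def tri_region_def by auto
qed

lemma tri_span_psubset:
  assumes gp: "general_position P" and "p \<in> P" "q \<in> P" "r \<in> P"
    and r: "r \<in> tri_span p q" "r \<noteq> q"
  shows "tri_span p r \<inter> P \<subset> tri_span p q \<inter> P"
proof -
  have "p \<noteq> q" using r tri_span_same by (metis singletonD)
  then obtain l where l: "tri_coord l q < tri_coord l p"
    using exists_tri_coord_less by blast
  have "min (tri_coord l p) (tri_coord l q) \<le> tri_coord l r"
    using r by (simp add: tri_span_def tri_region_def)
  then have "tri_coord l q \<le> tri_coord l r"
    using l by simp
  moreover have "tri_coord l q \<noteq> tri_coord l r"
    using general_position_tri_coord[OF gp] assms by metis
  ultimately have "q \<notin> tri_span p r"
    using l by (auto simp: tri_span_def tri_region_def not_le intro!: exI[of _ l])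
  moreover have "tri_span p r \<subseteq> tri_span p q"
    using r ends_in_tri_span tri_span_least by (metis tri_span_def)
  ultimately show ?thesis
    using \<open>q \<in> P\<close> ends_in_tri_span by blast
qed

definition tri_convex :: "pt set \<Rightarrow> pt set \<Rightarrow> bool" where
  "tri_convex P S \<longleftrightarrow> S \<subseteq> P \<and> (\<forall>p\<in>S. \<forall>q\<in>S. tri_span p q \<inter> P \<subseteq> S)"

lemma reach_tri_convex:
  assumes "finite P" "general_position P" "tri_convex P S"
  shows "p \<in> S \<Longrightarrow> q \<in> S \<Longrightarrow> reach (tri_adj P) S p q"
proof (induction "card (tri_span p q \<inter> P)" arbitrary: p q rule: less_induct)
  case (less p q)
  have "p \<in> P" "q \<in> P" using less.prems assms(3) by (auto simp: tri_convex_def)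
  show ?case
  proof (cases "tri_span p q \<inter> P \<subseteq> {p, q}")
    case True
    then have "p = q \<or> tri_adj P p q"
      using \<open>p \<in> P\<close> \<open>q \<in> P\<close> ends_in_tri_span unfolding tri_adj_iff tri_span_def by blast
    then show ?thesis
      using less.prems unfolding reach_def by auto
  next
    case False
    then obtain r where r: "r \<in> tri_span p q" "r \<in> P" "r \<noteq> p" "r \<noteq> q"
      by blast
    then have "r \<in> S" using less.prems assms(3) by (auto simp: tri_convex_def)
    have "card (tri_span p r \<inter> P) < card (tri_span p q \<inter> P)"
      using tri_span_psubset[OF assms(2) \<open>p \<in> P\<close> \<open>q \<in> P\<close> r(2,1,4)] assms(1)
      by (simp add: psubset_card_mono)
    moreover have "card (tri_span q r \<inter> P) < card (tri_span q p \<inter> P)"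
      using tri_span_psubset[OF assms(2) \<open>q \<in> P\<close> \<open>p \<in> P\<close> r(2) _ r(3)] r(1) assms(1)
      by (simp add: psubset_card_mono tri_span_commute)
    ultimately have "reach (tri_adj P) S p r" "reach (tri_adj P) S r q"
      using less.hyps less.prems \<open>r \<in> S\<close> by (auto simp: tri_span_commute)
    then show ?thesis
      unfolding reach_def by (rule rtranclp_trans)
  qed
qed

lemma tri_convex_halfplane: "tri_convex P {x \<in> P. tri_coord l v < tri_coord l x}"
  unfolding tri_convex_def tri_span_def tri_region_def
  by (auto intro: less_le_trans[OF min_less_iff_conj[THEN iffD2]])

lemma reach_mono: "reach E S a b \<Longrightarrow> S \<subseteq> S' \<Longrightarrow> reach E S' a b"
  unfolding reach_def by (erule rtranclp_mono[THEN predicate2D, rotated]) auto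

definition tri_wedge :: "pt \<Rightarrow> side \<Rightarrow> side \<Rightarrow> pt set" where
  "tri_wedge v i j = {z. tri_coord i v \<le> tri_coord i z \<and> tri_coord j v \<le> tri_coord j z}"

lemma reach_delete_vertex:
  assumes "finite P" and gp: "general_position P" and "v \<in> P"
    and wedges: "\<And>i j. i \<noteq> j \<Longrightarrow> P \<inter> tri_wedge v i j \<noteq> {v}"
    and "a \<in> P - {v}" "b \<in> P - {v}"
  shows "reach (tri_adj P) (P - {v}) a b"
proof -
  define H where "H l = {x \<in> P. tri_coord l v < tri_coord l x}" for l
  have H_reach: "reach (tri_adj P) (P - {v}) x y" if "x \<in> H l" "y \<in> H l" for x y l
  proof (rule reach_mono)
    show "reach (tri_adj P) (H l) x y"
      using reach_tri_convex[OF assms(1,2) tri_convex_halfplane] that by (simp add: H_def)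
    show "H l \<subseteq> P - {v}"
      by (auto simp: H_def)
  qed
  have H_cover: "\<exists>l. x \<in> H l" if "x \<in> P - {v}" for x
    using that exists_tri_coord_less[of x v] by (auto simp: H_def)
  obtain i j where "a \<in> H i" "b \<in> H j"
    using H_cover assms(5,6) by blast
  show ?thesis
  proof (cases "i = j")
    case True
    then show ?thesis using H_reach \<open>a \<in> H i\<close> \<open>b \<in> H j\<close> by blast
  next
    case False
    then obtain z where z: "z \<in> P" "z \<noteq> v" "z \<in> tri_wedge v i j"
      using wedges[of i j] \<open>v \<in> P\<close> by (auto simp: tri_wedge_def)
    moreover have "tri_coord l v \<noteq> tri_coord l z" for l
      using general_position_tri_coord[OF gp \<open>v \<in> P\<close> z(1)] z(2) by metis
    ultimately have "z \<in> H i" "z \<in> H j"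
      by (auto simp: H_def tri_wedge_def order_le_less)
    then have "reach (tri_adj P) (P - {v}) a z" "reach (tri_adj P) (P - {v}) z b"
      using H_reach \<open>a \<in> H i\<close> \<open>b \<in> H j\<close> by blast+
    then show ?thesis
      unfolding reach_def by (rule rtranclp_trans)
  qed
qed

lemma not_cut_vertex_if_reach:
  assumes "finite V" and "\<And>a b. a \<in> V - {v} \<Longrightarrow> b \<in> V - {v} \<Longrightarrow> reach E (V - {v}) a b"
  shows "\<not> cut_vertex E V v"
proof
  assume cut: "cut_vertex E V v"
  have "{w \<in> V - {v}. reach E (V - {v}) u w} = V - {v}" if "u \<in> V - {v}" for u
    using assms(2) that by blast
  then have "(\<lambda>u. {w \<in> V - {v}. reach E (V - {v}) u w}) ` (V - {v}) \<subseteq> {V - {v}}"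
    by blast
  then have "num_components E (V - {v}) \<le> card {V - {v}}"
    unfolding num_components_def by (intro card_mono) auto
  moreover have "num_components E V > 0"
    using assms(1) cut by (auto simp: num_components_def cut_vertex_def card_gt_0_iff)
  ultimately show False
    using cut by (simp add: cut_vertex_def)
qed

lemma cut_vertex_empty_wedge:
  assumes "finite P" "general_position P" and cut: "cut_vertex (tri_adj P) P v"
  shows "\<exists>i j. i \<noteq> j \<and> P \<inter> tri_wedge v i j = {v}"
proof (rule ccontr)
  assume "\<not> ?thesis"
  then have wedges: "\<And>i j. i \<noteq> j \<Longrightarrow> P \<inter> tri_wedge v i j \<noteq> {v}"
    by blast
  have "v \<in> P"
    using cut by (simp add: cut_vertex_def)
  with wedges have "\<not> cut_vertex (tri_adj P) P v"
    using not_cut_vertex_if_reach[OF assms(1) reach_delete_vertex[OF assms(1,2)]] by blast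
  with cut show False
    by contradiction
qed

lemma tri_coord_wedge_ray:
  assumes "i \<noteq> j"
  shows "tri_coord l (v + t *\<^sub>R (tri_normal i + tri_normal j))
    = tri_coord l v + t * (if l = i \<or> l = j then 2 else -4)"
  using assms by (simp add: tri_coord_add tri_coord_scaleR tri_coord_normal)

lemma empty_tri_wedge_avoid:
  assumes "general_position P" "v \<in> P" and empty: "P \<inter> tri_wedge v i j = {v}"
    and "x \<in> P"
  shows "x = v \<or> tri_coord i x < tri_coord i v \<or> tri_coord j x < tri_coord j v"
  using assms general_position_tri_coord[OF assms(1,4,2)]
  by (force simp: tri_wedge_def not_le order_le_less)

lemma tri_ray_misses_drawing:
  assumes gp: "general_position P" and "v \<in> P" and "i \<noteq> j"
    and empty: "P \<inter> tri_wedge v i j = {v}" and "t > 0"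
  shows "v + t *\<^sub>R (tri_normal i + tri_normal j) \<notin> tri_drawing P"
proof
  define w where "w = v + t *\<^sub>R (tri_normal i + tri_normal j)"
  have rises: "tri_coord l v < tri_coord l w" if "l = i \<or> l = j" for l
    using tri_coord_wedge_ray[OF \<open>i \<noteq> j\<close>, of l v t] that \<open>t > 0\<close> by (auto simp: w_def)
  have falls: "tri_coord l w < tri_coord l v" if "l \<noteq> i" "l \<noteq> j" for l
    using tri_coord_wedge_ray[OF \<open>i \<noteq> j\<close>, of l v t] that \<open>t > 0\<close> by (auto simp: w_def)
  note avoid = empty_tri_wedge_avoid[OF gp \<open>v \<in> P\<close> empty]
  assume "w \<in> tri_drawing P"
  then consider "w \<in> P" | p q where "tri_adj P p q" "w \<in> closed_segment p q"
    unfolding tri_drawing_def w_def by blast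
  then show False
  proof cases
    case 1
    then show False
      using avoid rises by fastforce
  next
    case (2 p q)
    then obtain c where "p \<in> P" "q \<in> P" "p \<noteq> q" and c: "tri_region c \<inter> P = {p, q}"
      unfolding tri_adj_iff by blast
    have above: "tri_coord l v < max (tri_coord l p) (tri_coord l q)" if "l = i \<or> l = j" for l
      using rises[OF that] tri_coord_closed_segment(2)[OF 2(2), of l] by auto
    \<comment> \<open>the down-triangle witnessing the edge pq contains v\<close>
    have min_le: "min (tri_coord l p) (tri_coord l q) \<le> tri_coord l v" for l
    proof (cases "l = i \<or> l = j")
      case True
      then show ?thesis
        using avoid[OF \<open>p \<in> P\<close>] avoid[OF \<open>q \<in> P\<close>] above[of i] above[of j]
        by (auto simp: min_def max_def split: if_splits)
    next
      case False
      then show ?thesis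
        using falls[of l] tri_coord_closed_segment(1)[OF 2(2), of l] by auto
    qed
    have c_le: "c l \<le> min (tri_coord l p) (tri_coord l q)" for l
      using c by (auto simp: tri_region_def)
    have "v \<in> tri_region c"
      unfolding tri_region_def using order_trans[OF c_le min_le] by blast
    then have "v \<in> {p, q}"
      using c \<open>v \<in> P\<close> by blast
    then show False
      using above[of i] above[of j] avoid[OF \<open>p \<in> P\<close>] avoid[OF \<open>q \<in> P\<close>] \<open>p \<noteq> q\<close>
      by (auto simp: max_def)
  qed
qed

lemma unbounded_connected_subset_outside:
  fixes S T :: "'a::real_normed_vector set"
  assumes "connected T" "\<not> bounded T" "T \<inter> S = {}"
  shows "T \<subseteq> outside S"
proof
  fix x assume "x \<in> T"
  then have "T \<subseteq> connected_component_set (- S) x"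
    using assms(1,3) by (intro connected_component_maximal) auto
  then have "\<not> bounded (connected_component_set (- S) x)"
    using assms(2) bounded_subset by blast
  then show "x \<in> outside S"
    by (simp add: outside)
qed

lemma unbounded_ray:
  fixes v d :: "'a::real_normed_vector"
  assumes "d \<noteq> 0"
  shows "\<not> bounded ((\<lambda>t. v + t *\<^sub>R d) ` {0<..})"
proof
  assume "bounded ((\<lambda>t. v + t *\<^sub>R d) ` {0<..})"
  then obtain B where B: "\<And>t. t > 0 \<Longrightarrow> norm (v + t *\<^sub>R d) \<le> B"
    by (auto simp: bounded_iff)
  define t where "t = (\<bar>B\<bar> + norm v + 1) / norm d"
  have "t > 0"
    using assms by (simp add: t_def add_nonneg_pos)
  have "norm (t *\<^sub>R d) = \<bar>B\<bar> + norm v + 1"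
    using assms \<open>t > 0\<close> by (simp add: t_def)
  moreover have "norm (t *\<^sub>R d) \<le> norm (v + t *\<^sub>R d) + norm v"
    using norm_triangle_ineq4[of "v + t *\<^sub>R d" v] by simp
  ultimately show False
    using B[OF \<open>t > 0\<close>] by linarith
qed

lemma frontier_outside_if_ray_escapes:
  fixes S :: "'a::real_normed_vector set"
  assumes "v \<in> S" "d \<noteq> 0" and escapes: "\<And>t. t > 0 \<Longrightarrow> v + t *\<^sub>R d \<notin> S"
  shows "v \<in> frontier (outside S)"
proof -
  let ?ray = "(\<lambda>t. v + t *\<^sub>R d) ` {0<..}"
  have "?ray \<subseteq> outside S"
  proof (rule unbounded_connected_subset_outside)
    show "connected ?ray"
      by (intro connected_continuous_image connected_Ioi continuous_intros)
    show "\<not> bounded ?ray"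
      using assms(2) by (rule unbounded_ray)
    show "?ray \<inter> S = {}"
      using escapes by blast
  qed
  then have "\<forall>n. v + inverse (real (Suc n)) *\<^sub>R d \<in> outside S"
    by force
  moreover have "(\<lambda>n. v + inverse (real (Suc n)) *\<^sub>R d) \<longlonglongrightarrow> v"
    using tendsto_add[OF tendsto_const tendsto_scaleR[OF LIMSEQ_inverse_real_of_nat tendsto_const]]
    by simp
  ultimately have "v \<in> closure (outside S)"
    unfolding closure_sequential
    by (rule exI[where x = "\<lambda>n. v + inverse (real (Suc n)) *\<^sub>R d", OF conjI])
  moreover have "v \<notin> interior (outside S)"
    using assms(1) interior_subset outside_no_overlap by blast
  ultimately show ?thesis
    by (simp add: frontier_def)
qed

theorem corollary1:
  fixes P :: "(real \<times> real) set" and v :: "real \<times> real"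
  assumes "finite P" and "general_position P"
    and "cut_vertex (tri_adj P) P v"
  shows "v \<in> frontier (outer_face P)"
proof -
  obtain i j where "i \<noteq> j" and empty: "P \<inter> tri_wedge v i j = {v}"
    using cut_vertex_empty_wedge[OF assms] by blast
  have "v \<in> P"
    using assms(3) by (simp add: cut_vertex_def)
  have "tri_coord i (tri_normal i + tri_normal j) = 2"
    using \<open>i \<noteq> j\<close> by (simp add: tri_coord_add tri_coord_normal)
  then have "tri_normal i + tri_normal j \<noteq> 0"
    by (auto simp: tri_coord_def)
  moreover have "v \<in> tri_drawing P"
    using \<open>v \<in> P\<close> by (simp add: tri_drawing_def)
  ultimately show ?thesis
    unfolding outer_face_def using tri_ray_misses_drawing[OF assms(2) \<open>v \<in> P\<close> \<open>i \<noteq> j\<close> empty]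
    by (intro frontier_outside_if_ray_escapes) auto
qed

end
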